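(* Let $n=p+q$, let $h^1,\dots,h^n:\mathbb{R}^{p,q}\to\mathcal{C}\ell_{\circledS}(p,q)$ be a smooth Clifford field vector, $h_\rho=\eta_{\rho\mu}h^\mu$, and let $C_1,\dots,C_n:\mathbb{R}^{p,q}\to\mathcal{C}\ell_{\circledS}(p,q)$ be smooth functions satisfying $$\partial_\mu h_\rho-[C_\mu,h_\rho]=0\quad\text{for all }\mu,\rho=1,\dots,n.$$ Let $S:\mathbb{R}^{p,q}\to\mathcal{C}\ell(p,q)$ be a smooth function with values in invertible elements such that $S^{-1}\partial_\mu S\in\mathcal{C}\ell_{\circledS}(p,q)$ for all $\mu$ and all $x$. Put $\acute h_\rho=S^{-1}h_\rho S$ and $\acute C_\mu=S^{-1}C_\mu S-S^{-1}\partial_\mu S$. Then $\acute h_\rho,\acute C_\mu$ take values in $\mathcal{C}\ell_{\circledS}(p,q)$ and $$\partial_\mu \acute h_\rho-[\acute C_\mu,\acute h_\rho]=0\quad\text{for all }\mu,\rho=1,\dots,n.$$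
   Context: $\mathbb{R}^{p,q}$ is $\mathbb{R}^n$ with Cartesian coordinates $x^1,\dots,x^n$, $\partial_\mu=\partial/\partial x^\mu$, and metric $\eta=(\eta_{\mu\nu})=(\eta^{\mu\nu})=\mathrm{diag}(1,\dots,1,-1,\dots,-1)$ ($p$ ones, $q$ minus ones); Einstein summation is used. $\mathcal{C}\ell(p,q)$ is the complex Clifford algebra with identity $e$ and generators $e^1,\dots,e^n$, $e^ae^b+e^be^a=2\eta^{ab}e$, with basis $e$, $e^{a_1\dots a_k}=e^{a_1}\cdots e^{a_k}$ ($a_1<\dots<a_k$); functions into it are differentiated coefficientwise in this fixed basis. $[U,V]=UV-VU$. $\pi_k$ is the projection onto the span of the basis elements with $k$ indices, $\mathrm{Tr}(U)$ the coefficient of $e$. The center is $\mathcal{C}\ell_0$ for even $n$ and $\mathcal{C}\ell_0\oplus\mathcal{C}\ell_n$ for odd $n$; $\mathcal{C}\ell_{\circledS}(p,q)$ is the set of elements with zero projection onto the center. A Clifford field vector is a collection $h^\mu:\mathbb{R}^{p,q}\to\mathcal{C}\ell(p,q)$, $\mu=1,\dots,n$, with $h^\mu h^\nu+h^\nu h^\mu=2\eta^{\mu\nu}e$ and $\mathrm{Tr}(h^1\cdots h^n)=0$ at every point. *)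

theory Defs
  imports "HOL-Analysis.Analysis"
begin

text \<open>
The index set {1,...,n} of generators e^1,...,e^n (and of the Cartesian
coordinates x^1,...,x^n) is modelled by a finite linearly ordered type 'n with n = CARD('n);
the k-th element of 'n in the order corresponds to index k.  The first p indices have
eta = 1, the remaining q = n - p have eta = -1.
An element of the complex Clifford algebra Cl(p,q) is its coefficient family with respect
to the basis e^A (A a subset of the generators, e^{} = e), i.e. a map 'n set => complex.
\<close>

type_synonym 'n cl = "'n set \<Rightarrow> complex"

definition idx :: "'n::{finite,linorder} \<Rightarrow> nat" where
  "idx a = card {b. b < a} + 1"

definition eta :: "nat \<Rightarrow> 'n::{finite,linorder} \<Rightarrow> complex" where
  "eta p a = (if idx a \<le> p then 1 else -1)"

text \<open>sign of e^A e^B = sign * e^{A symdiff B}\<close>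
definition blade_sign :: "nat \<Rightarrow> 'n::{finite,linorder} set \<Rightarrow> 'n set \<Rightarrow> complex" where
  "blade_sign p A B =
     (-1) ^ card {(a, b). a \<in> A \<and> b \<in> B \<and> b < a} * (\<Prod>a\<in>A \<inter> B. eta p a)"

definition cl_mul :: "nat \<Rightarrow> 'n::{finite,linorder} cl \<Rightarrow> 'n cl \<Rightarrow> 'n cl" where
  "cl_mul p U V = (\<lambda>C. \<Sum>A\<in>UNIV. \<Sum>B\<in>UNIV.
      if (A - B) \<union> (B - A) = C then blade_sign p A B * U A * V B else 0)"

definition cl_zero :: "'n cl" where
  "cl_zero = (\<lambda>A. 0)"

definition cl_add :: "'n cl \<Rightarrow> 'n cl \<Rightarrow> 'n cl" where
  "cl_add U V = (\<lambda>A. U A + V A)"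

definition cl_sub :: "'n cl \<Rightarrow> 'n cl \<Rightarrow> 'n cl" where
  "cl_sub U V = (\<lambda>A. U A - V A)"

definition cl_one :: "'n cl" where
  "cl_one = (\<lambda>A. if A = {} then 1 else 0)"

definition cl_scale :: "complex \<Rightarrow> 'n cl \<Rightarrow> 'n cl" where
  "cl_scale c U = (\<lambda>A. c * U A)"

definition cl_comm :: "nat \<Rightarrow> 'n::{finite,linorder} cl \<Rightarrow> 'n cl \<Rightarrow> 'n cl" where
  "cl_comm p U V = cl_sub (cl_mul p U V) (cl_mul p V U)"

definition cl_invertible :: "nat \<Rightarrow> 'n::{finite,linorder} cl \<Rightarrow> bool" where
  "cl_invertible p U \<longleftrightarrow> (\<exists>V. cl_mul p U V = cl_one \<and> cl_mul p V U = cl_one)"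

definition cl_inv :: "nat \<Rightarrow> 'n::{finite,linorder} cl \<Rightarrow> 'n cl" where
  "cl_inv p U = (SOME V. cl_mul p U V = cl_one \<and> cl_mul p V U = cl_one)"

definition cl_tr :: "'n cl \<Rightarrow> complex" where
  "cl_tr U = U {}"

definition cl_prod_list :: "nat \<Rightarrow> 'n::{finite,linorder} cl list \<Rightarrow> 'n cl" where
  "cl_prod_list p Us = foldr (cl_mul p) Us cl_one"

text \<open>Cl_circledS(p,q): zero projection onto the center (Cl_0 for even n, Cl_0 + Cl_n for odd n)\<close>
definition cl_circS :: "'n::{finite,linorder} cl set" where
  "cl_circS = {U. U {} = 0 \<and> (odd CARD('n) \<longrightarrow> U UNIV = 0)}"

definition partial :: "'n \<Rightarrow> ((real, 'n::{finite,linorder}) vec \<Rightarrow> complex) \<Rightarrow> (real, 'n) vec \<Rightarrow> complex" where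
  "partial i f x = vector_derivative (\<lambda>t. f (x + t *\<^sub>R axis i 1)) (at 0)"

fun iter_partial :: "('n::{finite,linorder}) list \<Rightarrow> ((real, 'n) vec \<Rightarrow> complex) \<Rightarrow> (real, 'n) vec \<Rightarrow> complex" where
  "iter_partial [] f = f"
| "iter_partial (i # is) f = partial i (iter_partial is f)"

definition smooth_fun :: "((real, 'n::{finite,linorder}) vec \<Rightarrow> complex) \<Rightarrow> bool" where
  "smooth_fun f \<longleftrightarrow> (\<forall>is. continuous_on UNIV (iter_partial is f) \<and>
      (\<forall>i x. (\<lambda>t. iter_partial is f (x + t *\<^sub>R axis i 1)) differentiable (at 0)))"

definition cl_smooth :: "((real, 'n::{finite,linorder}) vec \<Rightarrow> 'n cl) \<Rightarrow> bool" where
  "cl_smooth F \<longleftrightarrow> (\<forall>A. smooth_fun (\<lambda>x. F x A))"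

definition cl_partial :: "'n::{finite,linorder} \<Rightarrow> ((real, 'n) vec \<Rightarrow> 'n cl) \<Rightarrow> (real, 'n) vec \<Rightarrow> 'n cl" where
  "cl_partial i F x = (\<lambda>A. partial i (\<lambda>y. F y A) x)"

definition clifford_field_vector :: "nat \<Rightarrow> ('n::{finite,linorder} \<Rightarrow> (real, 'n) vec \<Rightarrow> 'n cl) \<Rightarrow> bool" where
  "clifford_field_vector p h \<longleftrightarrow> (\<forall>x.
      (\<forall>\<mu> \<nu>. cl_add (cl_mul p (h \<mu> x) (h \<nu> x)) (cl_mul p (h \<nu> x) (h \<mu> x))
              = cl_scale (2 * (if \<mu> = \<nu> then eta p \<mu> else 0)) cl_one) \<and>
      cl_tr (cl_prod_list p (map (\<lambda>\<mu>. h \<mu> x) (sorted_list_of_set UNIV))) = 0)"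

definition lower :: "nat \<Rightarrow> ('n::{finite,linorder} \<Rightarrow> (real, 'n) vec \<Rightarrow> 'n cl) \<Rightarrow> 'n \<Rightarrow> (real, 'n) vec \<Rightarrow> 'n cl" where
  "lower p h \<rho> x = cl_scale (eta p \<rho>) (h \<rho> x)"

end

theory Submission
  imports Defs
begin

text \<open>
Conjugation by \<open>S\<close> is an algebra automorphism fixing the coefficients of \<open>e\<close> and, for odd
\<open>n\<close>, of \<open>e\<^sup>1 \<cdots> e\<^sup>n\<close>; these are exactly the coefficients in which \<open>U V\<close> and \<open>V U\<close>
agree, so the transformed fields keep zero central part. Differentiating
\<open>h' = S\<inverse> h S\<close> with \<open>\<partial>(S\<inverse>) = - S\<inverse> (\<partial>S) S\<inverse>\<close> gives
\<open>\<partial>h' = S\<inverse> (\<partial>h) S - [S\<inverse> \<partial>S, h']\<close>, and \<open>S\<inverse> [C, h] S = [S\<inverse> C S, h']\<close>, hence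
\<open>\<partial>h' = [C', h']\<close>. That \<open>S\<inverse>\<close> is differentiable at all follows from continuity of
inversion, a perturbation estimate in the submultiplicative sum-of-moduli norm on coefficients.
\<close>

subsection \<open>Blade signs\<close>

lemma sym_diff_sym_diff [simp]: "sym_diff A (sym_diff A B) = B"
  by blast

lemma sym_diff_eq_iff: "sym_diff A B = C \<longleftrightarrow> B = sym_diff A C"
  by blast

definition inversions :: "'n::linorder set \<Rightarrow> 'n set \<Rightarrow> nat" where
  "inversions X Y = card {(a, b). a \<in> X \<and> b \<in> Y \<and> b < a}"

definition eta_prod :: "nat \<Rightarrow> 'n::{finite,linorder} set \<Rightarrow> complex" where
  "eta_prod p X = (\<Prod>a\<in>X. eta p a)"

lemma blade_sign_eq: "blade_sign p A B = (-1) ^ inversions A B * eta_prod p (A \<inter> B)"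
  unfolding blade_sign_def inversions_def eta_prod_def by simp

lemma inversions_Un_left:
  fixes X Y F :: "'n::{finite,linorder} set"
  assumes "X \<inter> Y = {}"
  shows "inversions (X \<union> Y) F = inversions X F + inversions Y F"
proof -
  have "{(a, b). a \<in> X \<union> Y \<and> b \<in> F \<and> b < a} =
        {(a, b). a \<in> X \<and> b \<in> F \<and> b < a} \<union> {(a, b). a \<in> Y \<and> b \<in> F \<and> b < a}" by auto
  then show ?thesis
    unfolding inversions_def using assms by (auto intro: card_Un_disjoint)
qed

lemma inversions_Un_right:
  fixes X Y F :: "'n::{finite,linorder} set"
  assumes "X \<inter> Y = {}"
  shows "inversions F (X \<union> Y) = inversions F X + inversions F Y"
proof -
  have "{(a, b). a \<in> F \<and> b \<in> X \<union> Y \<and> b < a} =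
        {(a, b). a \<in> F \<and> b \<in> X \<and> b < a} \<union> {(a, b). a \<in> F \<and> b \<in> Y \<and> b < a}" by auto
  then show ?thesis
    unfolding inversions_def using assms by (auto intro: card_Un_disjoint)
qed

lemma inversions_sym_diff_left:
  fixes A B F :: "'n::{finite,linorder} set"
  shows "inversions A F + inversions B F = inversions (sym_diff A B) F + 2 * inversions (A \<inter> B) F"
proof -
  have A: "A = (A - B) \<union> (A \<inter> B)" and B: "B = (B - A) \<union> (A \<inter> B)" by auto
  have "inversions A F = inversions (A - B) F + inversions (A \<inter> B) F"
    by (subst A, subst inversions_Un_left) auto
  moreover have "inversions B F = inversions (B - A) F + inversions (A \<inter> B) F"
    by (subst B, subst inversions_Un_left) auto
  moreover have "inversions (sym_diff A B) F = inversions (A - B) F + inversions (B - A) F"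
    by (rule inversions_Un_left) auto
  ultimately show ?thesis by simp
qed

lemma inversions_sym_diff_right:
  fixes A B F :: "'n::{finite,linorder} set"
  shows "inversions F A + inversions F B = inversions F (sym_diff A B) + 2 * inversions F (A \<inter> B)"
proof -
  have A: "A = (A - B) \<union> (A \<inter> B)" and B: "B = (B - A) \<union> (A \<inter> B)" by auto
  have "inversions F A = inversions F (A - B) + inversions F (A \<inter> B)"
    by (subst A, subst inversions_Un_right) auto
  moreover have "inversions F B = inversions F (B - A) + inversions F (A \<inter> B)"
    by (subst B, subst inversions_Un_right) auto
  moreover have "inversions F (sym_diff A B) = inversions F (A - B) + inversions F (B - A)"
    by (rule inversions_Un_right) auto
  ultimately show ?thesis by simp
qed

lemma eta_prod_Un_disjoint: "X \<inter> Y = {} \<Longrightarrow> eta_prod p (X \<union> Y) = eta_prod p X * eta_prod p Y"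
  unfolding eta_prod_def by (simp add: prod.union_disjoint)

lemma blade_sign_assoc:
  "blade_sign p (sym_diff A B) F * blade_sign p A B =
   blade_sign p A (sym_diff B F) * blade_sign p B F"
proof -
  have minus_one_pow: "(-1::complex) ^ (k + 2 * l) = (-1) ^ k" for k l
    by (simp add: power_add power_mult)
  have "(-1::complex) ^ inversions (sym_diff A B) F = (-1) ^ inversions A F * (-1) ^ inversions B F"
    by (metis inversions_sym_diff_left minus_one_pow power_add)
  moreover have "(-1::complex) ^ inversions A (sym_diff B F) = (-1) ^ inversions A B * (-1) ^ inversions A F"
    by (metis inversions_sym_diff_right minus_one_pow power_add)
  moreover have "eta_prod p (sym_diff A B \<inter> F) * eta_prod p (A \<inter> B) =
      eta_prod p (A \<inter> sym_diff B F) * eta_prod p (B \<inter> F)"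
  proof -
    have "eta_prod p (sym_diff A B \<inter> F) * eta_prod p (A \<inter> B) =
        eta_prod p ((sym_diff A B \<inter> F) \<union> (A \<inter> B))"
      by (rule eta_prod_Un_disjoint[symmetric]) blast
    also have "(sym_diff A B \<inter> F) \<union> (A \<inter> B) = (A \<inter> sym_diff B F) \<union> (B \<inter> F)"
      by blast
    also have "eta_prod p \<dots> = eta_prod p (A \<inter> sym_diff B F) * eta_prod p (B \<inter> F)"
      by (rule eta_prod_Un_disjoint) blast
    finally show ?thesis .
  qed
  ultimately show ?thesis
    unfolding blade_sign_eq by (simp add: algebra_simps)
qed

lemma inversions_Compl:
  fixes A :: "'n::{finite,linorder} set"
  shows "inversions A (- A) + inversions (- A) A = card A * card (- A)"
proof -
  let ?X = "{(a, b). a \<in> A \<and> b \<in> - A \<and> b < a}"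
  let ?Y = "{(a, b). a \<in> - A \<and> b \<in> A \<and> b < a}"
  let ?Y' = "{(a, b). a \<in> A \<and> b \<in> - A \<and> a < b}"
  have "?Y' = prod.swap ` ?Y" by force
  then have "card ?Y = card ?Y'" by (simp add: card_image)
  moreover have "?X \<union> ?Y' = A \<times> (- A)" using less_linear by fastforce
  moreover have "?X \<inter> ?Y' = {}" by auto
  ultimately have "card ?X + card ?Y = card (A \<times> (- A))"
    using card_Un_disjoint[of ?X ?Y'] by simp
  then show ?thesis unfolding inversions_def by (simp add: card_cartesian_product)
qed

lemma blade_sign_Compl_commute:
  fixes A :: "'n::{finite,linorder} set"
  assumes "odd CARD('n)"
  shows "blade_sign p A (- A) = blade_sign p (- A) A"
proof -
  have "card A + card (- A) = CARD('n)"
    using card_Un_disjoint[of A "- A"] by (simp add: Un_commute)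
  then have "even (inversions A (- A) + inversions (- A) A)"
    using assms by (metis inversions_Compl even_add even_mult_iff)
  then have "(-1::complex) ^ inversions A (- A) = (-1) ^ inversions (- A) A"
    by (metis even_add neg_one_even_power neg_one_odd_power)
  then show ?thesis by (simp add: blade_sign_eq Int_commute)
qed

lemma norm_blade_sign [simp]:
  fixes A B :: "'n::{finite,linorder} set"
  shows "norm (blade_sign p A B) = 1"
proof -
  have norm_eta: "norm (eta p a) = 1" for a :: 'n by (simp add: eta_def)
  have "norm (eta_prod p X) = 1" for X :: "'n set"
    unfolding eta_prod_def prod_norm[symmetric] norm_eta by simp
  then show ?thesis by (simp add: blade_sign_eq norm_mult norm_power)
qed

lemma blade_sign_empty_left [simp]: "blade_sign p {} B = 1"
  and blade_sign_empty_right [simp]: "blade_sign p A {} = 1"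
  by (simp_all add: blade_sign_def)

subsection \<open>The Clifford product\<close>

lemma cl_mul_apply:
  "cl_mul p U V C = (\<Sum>A\<in>UNIV. blade_sign p A (sym_diff A C) * U A * V (sym_diff A C))"
  unfolding cl_mul_def sym_diff_eq_iff by simp

lemma sum_reindex_sym_diff:
  "(\<Sum>B\<in>UNIV. g B) = (\<Sum>B\<in>(UNIV::'a::finite set set). g (sym_diff A B))"
  by (rule sum.reindex_bij_witness[where i="sym_diff A" and j="sym_diff A"]) auto

lemma cl_mul_assoc: "cl_mul p (cl_mul p U V) W = cl_mul p U (cl_mul p V W)"
proof
  fix D
  let ?s = "blade_sign p"
  have "cl_mul p (cl_mul p U V) W D =
     (\<Sum>E\<in>UNIV. \<Sum>A\<in>UNIV. ?s E (sym_diff E D) * (?s A (sym_diff A E) * U A * V (sym_diff A E)) * W (sym_diff E D))"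
    by (simp add: cl_mul_apply sum_distrib_left sum_distrib_right)
  also have "\<dots> =
     (\<Sum>A\<in>UNIV. \<Sum>E\<in>UNIV. ?s E (sym_diff E D) * (?s A (sym_diff A E) * U A * V (sym_diff A E)) * W (sym_diff E D))"
    by (rule sum.swap)
  also have "\<dots> = (\<Sum>A\<in>UNIV. \<Sum>B\<in>UNIV.
      ?s (sym_diff A B) (sym_diff (sym_diff A B) D) * (?s A B * U A * V B) * W (sym_diff (sym_diff A B) D))"
  proof (rule sum.cong[OF refl])
    fix A
    show "(\<Sum>E\<in>UNIV. ?s E (sym_diff E D) * (?s A (sym_diff A E) * U A * V (sym_diff A E)) * W (sym_diff E D)) =
      (\<Sum>B\<in>UNIV. ?s (sym_diff A B) (sym_diff (sym_diff A B) D) * (?s A B * U A * V B) * W (sym_diff (sym_diff A B) D))"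
      by (subst sum_reindex_sym_diff[where A=A]) simp
  qed
  also have "\<dots> = (\<Sum>A\<in>UNIV. \<Sum>B\<in>UNIV.
      ?s A (sym_diff A D) * U A * (?s B (sym_diff B (sym_diff A D)) * V B * W (sym_diff B (sym_diff A D))))"
  proof (intro sum.cong refl)
    fix A B
    have "sym_diff (sym_diff A B) D = sym_diff B (sym_diff A D)" by blast
    with blade_sign_assoc[of p A B "sym_diff B (sym_diff A D)"]
    show "?s (sym_diff A B) (sym_diff (sym_diff A B) D) * (?s A B * U A * V B) * W (sym_diff (sym_diff A B) D) =
      ?s A (sym_diff A D) * U A * (?s B (sym_diff B (sym_diff A D)) * V B * W (sym_diff B (sym_diff A D)))"
      by (simp add: algebra_simps)
  qed
  also have "\<dots> = cl_mul p U (cl_mul p V W) D"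
    by (simp add: cl_mul_apply sum_distrib_left)
  finally show "cl_mul p (cl_mul p U V) W D = cl_mul p U (cl_mul p V W) D" .
qed

lemma cl_one_mul [simp]:
  fixes U :: "'n::{finite,linorder} cl"
  shows "cl_mul p cl_one U = U"
proof
  fix C
  have "cl_mul p cl_one U C = (\<Sum>A::'n set\<in>UNIV. if A = {} then U C else 0)"
    unfolding cl_mul_apply by (rule sum.cong[OF refl]) (auto simp: cl_one_def)
  then show "cl_mul p cl_one U C = U C" by simp
qed

lemma cl_mul_one [simp]: "cl_mul p U cl_one = U"
proof
  fix C
  have "cl_mul p U cl_one C = (\<Sum>A\<in>UNIV. if A = C then U A else 0)"
    unfolding cl_mul_apply by (intro sum.cong) (auto simp: cl_one_def)
  then show "cl_mul p U cl_one C = U C" by simp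
qed

lemma cl_mul_add_left: "cl_mul p (cl_add U V) W = cl_add (cl_mul p U W) (cl_mul p V W)"
  by (rule ext) (simp add: cl_mul_apply cl_add_def algebra_simps sum.distrib)

lemma cl_mul_sub_left: "cl_mul p (cl_sub U V) W = cl_sub (cl_mul p U W) (cl_mul p V W)"
  by (rule ext) (simp add: cl_mul_apply cl_sub_def algebra_simps sum_subtractf)

lemma cl_mul_sub_right: "cl_mul p W (cl_sub U V) = cl_sub (cl_mul p W U) (cl_mul p W V)"
  by (rule ext) (simp add: cl_mul_apply cl_sub_def algebra_simps sum_subtractf)

lemma cl_mul_scale_left: "cl_mul p (cl_scale c U) W = cl_scale c (cl_mul p U W)"
  by (rule ext) (simp add: cl_mul_apply cl_scale_def algebra_simps sum_distrib_left)

lemma cl_mul_scale_right: "cl_mul p W (cl_scale c U) = cl_scale c (cl_mul p W U)"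
  by (rule ext) (simp add: cl_mul_apply cl_scale_def algebra_simps sum_distrib_left)

lemma cl_mul_commute_empty: "cl_mul p U V {} = cl_mul p V U {}"
  by (simp add: cl_mul_apply algebra_simps)

lemma cl_mul_commute_UNIV:
  fixes U V :: "'n::{finite,linorder} cl"
  assumes "odd CARD('n)"
  shows "cl_mul p U V UNIV = cl_mul p V U UNIV"
proof -
  have sym_diff_UNIV: "sym_diff A UNIV = - A" for A :: "'n set" by blast
  have "cl_mul p U V UNIV = (\<Sum>A\<in>UNIV. blade_sign p (- A) A * U A * V (- A))"
    unfolding cl_mul_apply sym_diff_UNIV by (simp add: blade_sign_Compl_commute[OF assms])
  also have "\<dots> = (\<Sum>A\<in>UNIV. blade_sign p A (- A) * U (- A) * V A)"
    by (rule sum.reindex_bij_witness[where i=uminus and j=uminus]) auto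
  also have "\<dots> = cl_mul p V U UNIV"
    unfolding cl_mul_apply sym_diff_UNIV by (simp add: algebra_simps)
  finally show ?thesis .
qed

lemma cl_sub_eq_cl_zero_iff: "cl_sub U V = cl_zero \<longleftrightarrow> U = V"
  by (auto simp: cl_sub_def cl_zero_def fun_eq_iff)

lemma cl_comm_sub_left: "cl_comm p (cl_sub U V) W = cl_sub (cl_comm p U W) (cl_comm p V W)"
  unfolding cl_comm_def cl_mul_sub_left cl_mul_sub_right by (simp add: cl_sub_def fun_eq_iff)

lemma cl_inv_inverse:
  assumes "cl_invertible p U"
  shows "cl_mul p U (cl_inv p U) = cl_one" "cl_mul p (cl_inv p U) U = cl_one"
  using someI_ex[OF assms[unfolded cl_invertible_def]] by (simp_all add: cl_inv_def)

lemma cl_conjugate_comm: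
  assumes "cl_mul p S T = cl_one"
  shows "cl_mul p (cl_mul p T (cl_comm p K H)) S =
    cl_comm p (cl_mul p (cl_mul p T K) S) (cl_mul p (cl_mul p T H) S)"
proof -
  have cancel: "cl_mul p S (cl_mul p T U) = U" for U
    by (simp add: cl_mul_assoc[symmetric] assms)
  show ?thesis
    by (simp add: cl_comm_def cl_mul_sub_left cl_mul_sub_right cl_mul_assoc cancel)
qed

subsection \<open>The non-central part\<close>

lemma cl_circS_sub: "U \<in> cl_circS \<Longrightarrow> V \<in> cl_circS \<Longrightarrow> cl_sub U V \<in> cl_circS"
  by (simp add: cl_circS_def cl_sub_def)

lemma cl_circS_scale: "U \<in> cl_circS \<Longrightarrow> cl_scale c U \<in> cl_circS"
  by (simp add: cl_circS_def cl_scale_def)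

lemma cl_circS_conjugate:
  fixes U :: "'n::{finite,linorder} cl"
  assumes "cl_mul p S T = cl_one" "U \<in> cl_circS"
  shows "cl_mul p (cl_mul p T U) S \<in> cl_circS"
proof -
  have "cl_mul p (cl_mul p T U) S {} = cl_mul p S (cl_mul p T U) {}"
    and "odd CARD('n) \<Longrightarrow> cl_mul p (cl_mul p T U) S UNIV = cl_mul p S (cl_mul p T U) UNIV"
    by (simp_all add: cl_mul_commute_empty cl_mul_commute_UNIV)
  then show ?thesis
    using assms(2) by (simp add: cl_circS_def cl_mul_assoc[symmetric] assms(1))
qed

subsection \<open>Continuity and differentiability of inverses\<close>

definition cl_norm :: "'n::finite cl \<Rightarrow> real" where
  "cl_norm U = (\<Sum>A\<in>UNIV. norm (U A))"

lemma cl_norm_nonneg: "0 \<le> cl_norm U"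
  unfolding cl_norm_def by (simp add: sum_nonneg)

lemma norm_le_cl_norm: "norm (U A) \<le> cl_norm U"
  unfolding cl_norm_def by (rule member_le_sum) auto

lemma cl_norm_sub: "cl_norm (cl_sub U V) \<le> cl_norm U + cl_norm V"
  unfolding cl_norm_def cl_sub_def sum.distrib[symmetric]
  by (rule sum_mono) (rule norm_triangle_ineq4)

lemma cl_norm_mul: "cl_norm (cl_mul p U V) \<le> cl_norm U * cl_norm V"
proof -
  have "cl_norm (cl_mul p U V) \<le> (\<Sum>C\<in>UNIV. \<Sum>A\<in>UNIV. norm (U A) * norm (V (sym_diff A C)))"
    unfolding cl_norm_def cl_mul_apply
    by (intro sum_mono order_trans[OF norm_sum]) (simp add: norm_mult)
  also have "\<dots> = (\<Sum>A\<in>UNIV. norm (U A) * (\<Sum>C\<in>UNIV. norm (V (sym_diff A C))))"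
    by (subst sum.swap) (simp add: sum_distrib_left)
  also have "\<dots> = (\<Sum>A\<in>UNIV. norm (U A) * cl_norm V)"
  proof (intro sum.cong refl)
    fix A
    have "(\<Sum>C\<in>UNIV. norm (V (sym_diff A C))) = cl_norm V"
      unfolding cl_norm_def by (rule sum_reindex_sym_diff[symmetric])
    then show "norm (U A) * (\<Sum>C\<in>UNIV. norm (V (sym_diff A C))) = norm (U A) * cl_norm V"
      by simp
  qed
  also have "\<dots> = cl_norm U * cl_norm V"
    by (simp add: cl_norm_def sum_distrib_right)
  finally show ?thesis .
qed

lemma cl_inverse_difference:
  assumes "cl_mul p G F = cl_one" "cl_mul p F0 G0 = cl_one"
  shows "cl_mul p G (cl_mul p (cl_sub F F0) G0) = cl_sub G0 G"
  by (simp add: cl_mul_sub_left cl_mul_sub_right cl_mul_assoc[symmetric] assms)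

lemma cl_norm_inverse_perturbation:
  assumes inverse: "cl_mul p G F = cl_one" "cl_mul p F0 G0 = cl_one"
    and small: "cl_norm (cl_sub F F0) * cl_norm G0 \<le> 1 / 2"
  shows "cl_norm (cl_sub G0 G) \<le> 2 * cl_norm G0 ^ 2 * cl_norm (cl_sub F F0)"
proof -
  let ?c = "cl_norm G0" and ?d = "cl_norm (cl_sub F F0)"
  have M: "cl_norm (cl_sub G0 G) \<le> cl_norm G * (?d * ?c)"
    unfolding cl_inverse_difference[OF inverse, symmetric]
    by (meson cl_norm_mul cl_norm_nonneg mult_left_mono order_trans)
  have "G = cl_sub G0 (cl_sub G0 G)"
    by (simp add: cl_sub_def)
  then have "cl_norm G \<le> ?c + cl_norm (cl_sub G0 G)"
    by (metis cl_norm_sub)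
  moreover have "cl_norm G * (?d * ?c) \<le> cl_norm G / 2"
    using mult_left_mono[OF small cl_norm_nonneg[of G]] by simp
  ultimately have "cl_norm G \<le> 2 * ?c"
    using M by linarith
  then have "cl_norm G * (?d * ?c) \<le> 2 * ?c * (?d * ?c)"
    by (simp add: cl_norm_nonneg mult_right_mono)
  with M show ?thesis
    by (simp add: power2_eq_square algebra_simps)
qed

lemma tendsto_cl_mul:
  assumes "\<forall>A. ((\<lambda>t. U t A) \<longlongrightarrow> U0 A) F" "\<forall>A. ((\<lambda>t. V t A) \<longlongrightarrow> V0 A) F"
  shows "((\<lambda>t. cl_mul p (U t) (V t) C) \<longlongrightarrow> cl_mul p U0 V0 C) F"
  unfolding cl_mul_apply using assms
  by (intro tendsto_sum tendsto_mult tendsto_const) auto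

lemma tendsto_cl_inverse:
  assumes lim: "\<forall>B. ((\<lambda>t. f t B) \<longlongrightarrow> F0 B) F"
    and inverse: "\<And>t. cl_mul p (g t) (f t) = cl_one" "cl_mul p F0 G0 = cl_one"
  shows "((\<lambda>t. g t A) \<longlongrightarrow> G0 A) F"
proof -
  let ?c = "cl_norm G0" and ?d = "\<lambda>t. cl_norm (cl_sub (f t) F0)"
  have "(?d \<longlongrightarrow> 0) F"
    unfolding cl_norm_def cl_sub_def
    by (intro tendsto_null_sum tendsto_norm_zero) (use lim LIM_zero in auto)
  then have d_lim: "((\<lambda>t. 2 * ?c ^ 2 * ?d t) \<longlongrightarrow> 0) F"
    and dc_lim: "((\<lambda>t. ?d t * ?c) \<longlongrightarrow> 0) F"
    using tendsto_mult_right_zero tendsto_mult_left_zero by blast+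
  have "eventually (\<lambda>t. ?d t * ?c < 1 / 2) F"
    by (rule order_tendstoD(2)[OF dc_lim]) simp
  then have "eventually (\<lambda>t. ?d t * ?c \<le> 1 / 2) F"
    by (rule eventually_mono) simp
  then have "eventually (\<lambda>t. norm (g t A - G0 A) \<le> 2 * ?c ^ 2 * ?d t) F"
  proof eventually_elim
    case (elim t)
    have "norm (g t A - G0 A) \<le> cl_norm (cl_sub G0 (g t))"
      using norm_le_cl_norm[of "cl_sub G0 (g t)" A] by (simp add: cl_sub_def norm_minus_commute)
    also have "\<dots> \<le> 2 * ?c ^ 2 * ?d t"
      by (rule cl_norm_inverse_perturbation[OF inverse elim])
    finally show ?case .
  qed
  then have "((\<lambda>t. g t A - G0 A) \<longlongrightarrow> 0) F"
    using d_lim by (rule Lim_null_comparison)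
  then show ?thesis
    by (rule LIM_zero_cancel)
qed

lemma has_vector_derivative_iff_difference_quotient:
  fixes f :: "real \<Rightarrow> 'a::real_normed_vector"
  shows "(f has_vector_derivative D) (at x) \<longleftrightarrow> ((\<lambda>y. (f y - f x) /\<^sub>R (y - x)) \<longlongrightarrow> D) (at x)"
proof -
  have "norm (f y - f x - (y - x) *\<^sub>R D) / norm (y - x) = norm ((f y - f x) /\<^sub>R (y - x) - D)"
    if "y \<noteq> x" for y
  proof -
    have "(f y - f x) /\<^sub>R (y - x) - D = (f y - f x - (y - x) *\<^sub>R D) /\<^sub>R (y - x)"
      using that by (simp add: scaleR_diff_right)
    then show ?thesis by (simp add: divide_inverse_commute)
  qed
  then have "((\<lambda>y. norm (f y - f x - (y - x) *\<^sub>R D) / norm (y - x)) \<longlongrightarrow> 0) (at x) \<longleftrightarrow>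
      ((\<lambda>y. norm ((f y - f x) /\<^sub>R (y - x) - D)) \<longlongrightarrow> 0) (at x)"
    by (intro filterlim_cong) (auto simp: eventually_at_filter)
  then show ?thesis
    by (simp add: has_vector_derivative_def has_derivative_iff_norm bounded_linear_scaleR_left
        tendsto_norm_zero_iff LIM_zero_iff)
qed

lemma has_vector_derivative_cl_inverse:
  fixes f g :: "real \<Rightarrow> 'n::{finite,linorder} cl"
  assumes deriv: "\<And>B. ((\<lambda>t. f t B) has_vector_derivative D B) (at x)"
    and inverse: "\<And>t. cl_mul p (f t) (g t) = cl_one" "\<And>t. cl_mul p (g t) (f t) = cl_one"
  shows "((\<lambda>t. g t A) has_vector_derivative - cl_mul p (g x) (cl_mul p D (g x)) A) (at x)"
proof -
  define q where "q t = (\<lambda>B. (f t B - f x B) /\<^sub>R (t - x))" for t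
  have q_eq: "q t = cl_scale (of_real (inverse (t - x))) (cl_sub (f t) (f x))" for t
    by (simp add: q_def cl_scale_def cl_sub_def fun_eq_iff scaleR_conv_of_real)
  have "\<forall>B. ((\<lambda>t. f t B) \<longlongrightarrow> f x B) (at x)"
    using deriv has_vector_derivative_continuous continuous_at by blast
  then have g_lim: "\<forall>B. ((\<lambda>t. g t B) \<longlongrightarrow> g x B) (at x)"
    using tendsto_cl_inverse[where f=f and g=g, OF _ inverse(2) inverse(1)[of x]]
    by blast
  have q_lim: "\<forall>B. ((\<lambda>t. q t B) \<longlongrightarrow> D B) (at x)"
    using deriv by (simp add: q_def has_vector_derivative_iff_difference_quotient)
  have "((\<lambda>t. - cl_mul p (g t) (cl_mul p (q t) (g x)) A) \<longlongrightarrow> - cl_mul p (g x) (cl_mul p D (g x)) A) (at x)"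
    by (intro tendsto_minus tendsto_cl_mul g_lim allI q_lim tendsto_const)
  moreover have "- cl_mul p (g t) (cl_mul p (q t) (g x)) A = (g t A - g x A) /\<^sub>R (t - x)" for t
    unfolding q_eq cl_mul_scale_left cl_mul_scale_right cl_inverse_difference[OF inverse(2) inverse(1)]
    by (simp add: cl_scale_def cl_sub_def scaleR_conv_of_real algebra_simps)
  ultimately show ?thesis
    by (simp add: has_vector_derivative_iff_difference_quotient)
qed

subsection \<open>Partial derivatives of Clifford-valued functions\<close>

definition has_cl_partial ::
    "'n::{finite,linorder} \<Rightarrow> ((real, 'n) vec \<Rightarrow> 'n cl) \<Rightarrow> 'n cl \<Rightarrow> (real, 'n) vec \<Rightarrow> bool" where
  "has_cl_partial i F D x \<longleftrightarrow>
    (\<forall>A. ((\<lambda>t. F (x + t *\<^sub>R axis i 1) A) has_vector_derivative D A) (at 0))"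

lemma cl_partial_eqI: "has_cl_partial i F D x \<Longrightarrow> cl_partial i F x = D"
  unfolding has_cl_partial_def cl_partial_def partial_def
  by (auto intro!: vector_derivative_at)

lemma cl_smooth_has_cl_partial:
  assumes "cl_smooth F"
  shows "has_cl_partial i F (cl_partial i F x) x"
  unfolding has_cl_partial_def cl_partial_def partial_def
proof
  fix A
  have "smooth_fun (\<lambda>y. F y A)"
    using assms unfolding cl_smooth_def by blast
  then have "(\<lambda>t. iter_partial [] (\<lambda>y. F y A) (x + t *\<^sub>R axis i 1)) differentiable (at 0)"
    unfolding smooth_fun_def by blast
  then show "((\<lambda>t. F (x + t *\<^sub>R axis i 1) A) has_vector_derivative
      vector_derivative (\<lambda>t. F (x + t *\<^sub>R axis i 1) A) (at 0)) (at 0)"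
    by (simp add: vector_derivative_works)
qed

lemma has_cl_partial_scale:
  "has_cl_partial i F D x \<Longrightarrow> has_cl_partial i (\<lambda>y. cl_scale c (F y)) (cl_scale c D) x"
  unfolding has_cl_partial_def cl_scale_def by (auto intro: has_vector_derivative_mult_right)

lemma has_cl_partial_mul:
  fixes F G :: "(real, 'n::{finite,linorder}) vec \<Rightarrow> 'n cl"
  assumes F: "has_cl_partial i F F' x" and G: "has_cl_partial i G G' x"
  shows "has_cl_partial i (\<lambda>y. cl_mul p (F y) (G y))
    (cl_add (cl_mul p (F x) G') (cl_mul p F' (G x))) x"
  unfolding has_cl_partial_def
proof
  fix C :: "'n set"
  let ?F = "\<lambda>t A. F (x + t *\<^sub>R axis i 1) A" and ?G = "\<lambda>t B. G (x + t *\<^sub>R axis i 1) B"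
  let ?s = "\<lambda>A. blade_sign p A (sym_diff A C)"
  have F': "((\<lambda>t. ?F t A) has_vector_derivative F' A) (at 0)"
    and G': "((\<lambda>t. ?G t A) has_vector_derivative G' A) (at 0)" for A
    using F G unfolding has_cl_partial_def by auto
  have "((\<lambda>t. ?s A * ?F t A * ?G t (sym_diff A C)) has_vector_derivative
      ?s A * ?F 0 A * G' (sym_diff A C) + ?s A * F' A * ?G 0 (sym_diff A C)) (at 0)" for A
    by (rule has_vector_derivative_mult[OF has_vector_derivative_mult_right[OF F'] G'])
  then have "((\<lambda>t. \<Sum>A\<in>UNIV. ?s A * ?F t A * ?G t (sym_diff A C)) has_vector_derivative
      (\<Sum>A\<in>UNIV. ?s A * ?F 0 A * G' (sym_diff A C) + ?s A * F' A * ?G 0 (sym_diff A C))) (at 0)"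
    by (rule has_vector_derivative_sum)
  then show "((\<lambda>t. cl_mul p (F (x + t *\<^sub>R axis i 1)) (G (x + t *\<^sub>R axis i 1)) C) has_vector_derivative
      cl_add (cl_mul p (F x) G') (cl_mul p F' (G x)) C) (at 0)"
    by (simp add: cl_mul_apply cl_add_def sum.distrib)
qed

lemma has_cl_partial_inverse:
  assumes S: "has_cl_partial i S S' x"
    and inverse: "\<And>y. cl_mul p (S y) (T y) = cl_one" "\<And>y. cl_mul p (T y) (S y) = cl_one"
  shows "has_cl_partial i T (cl_scale (-1) (cl_mul p (T x) (cl_mul p S' (T x)))) x"
  unfolding has_cl_partial_def
proof
  fix A
  show "((\<lambda>t. T (x + t *\<^sub>R axis i 1) A) has_vector_derivative
      cl_scale (-1) (cl_mul p (T x) (cl_mul p S' (T x))) A) (at 0)"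
    using has_vector_derivative_cl_inverse[of "\<lambda>t. S (x + t *\<^sub>R axis i 1)" S' 0 p
        "\<lambda>t. T (x + t *\<^sub>R axis i 1)" A] S inverse
    by (simp add: has_cl_partial_def cl_scale_def)
qed

lemma has_cl_partial_conjugate:
  assumes S: "has_cl_partial i S S' x" and H: "has_cl_partial i H H' x"
    and inverse: "\<And>y. cl_mul p (S y) (T y) = cl_one" "\<And>y. cl_mul p (T y) (S y) = cl_one"
  shows "has_cl_partial i (\<lambda>y. cl_mul p (cl_mul p (T y) (H y)) (S y))
    (cl_sub (cl_mul p (cl_mul p (T x) H') (S x))
      (cl_comm p (cl_mul p (T x) S') (cl_mul p (cl_mul p (T x) (H x)) (S x)))) x"
proof -
  let ?T' = "cl_scale (-1) (cl_mul p (T x) (cl_mul p S' (T x)))"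
  have cancel: "cl_mul p (S x) (cl_mul p (T x) U) = U" for U
    by (simp add: cl_mul_assoc[symmetric] inverse(1))
  have "has_cl_partial i (\<lambda>y. cl_mul p (cl_mul p (T y) (H y)) (S y))
    (cl_add (cl_mul p (cl_mul p (T x) (H x)) S')
      (cl_mul p (cl_add (cl_mul p (T x) H') (cl_mul p ?T' (H x))) (S x))) x"
    by (intro has_cl_partial_mul has_cl_partial_inverse[OF S inverse] H S)
  moreover have "cl_add (cl_mul p (cl_mul p (T x) (H x)) S')
      (cl_mul p (cl_add (cl_mul p (T x) H') (cl_mul p ?T' (H x))) (S x)) =
    cl_sub (cl_mul p (cl_mul p (T x) H') (S x))
      (cl_comm p (cl_mul p (T x) S') (cl_mul p (cl_mul p (T x) (H x)) (S x)))"
    by (simp add: cl_comm_def cl_mul_add_left cl_mul_sub_left cl_mul_sub_right cl_mul_scale_left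
        cl_mul_assoc cancel) (simp add: cl_add_def cl_sub_def cl_scale_def fun_eq_iff)
  ultimately show ?thesis by simp
qed

theorem theorem6:
  fixes p :: nat
    and h C :: "'n::{finite,linorder} \<Rightarrow> (real, 'n) vec \<Rightarrow> 'n cl"
    and S :: "(real, 'n) vec \<Rightarrow> 'n cl"
  assumes p_le: "p \<le> CARD('n)"
    and h_cfv: "clifford_field_vector p h"
    and h_smooth: "\<And>\<mu>. cl_smooth (h \<mu>)"
    and h_circ: "\<And>\<mu> x. h \<mu> x \<in> cl_circS"
    and C_smooth: "\<And>\<mu>. cl_smooth (C \<mu>)"
    and C_circ: "\<And>\<mu> x. C \<mu> x \<in> cl_circS"
    and eq: "\<And>\<mu> \<rho> x. cl_sub (cl_partial \<mu> (lower p h \<rho>) x) (cl_comm p (C \<mu> x) (lower p h \<rho> x)) = cl_zero"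
    and S_smooth: "cl_smooth S"
    and S_inv: "\<And>x. cl_invertible p (S x)"
    and S_circ: "\<And>\<mu> x. cl_mul p (cl_inv p (S x)) (cl_partial \<mu> S x) \<in> cl_circS"
  defines "h' \<equiv> \<lambda>\<rho> x. cl_mul p (cl_mul p (cl_inv p (S x)) (lower p h \<rho> x)) (S x)"
    and "C' \<equiv> \<lambda>\<mu> x. cl_sub (cl_mul p (cl_mul p (cl_inv p (S x)) (C \<mu> x)) (S x))
                    (cl_mul p (cl_inv p (S x)) (cl_partial \<mu> S x))"
  shows "(\<forall>\<rho> x. h' \<rho> x \<in> cl_circS) \<and> (\<forall>\<mu> x. C' \<mu> x \<in> cl_circS) \<and>
         (\<forall>\<mu> \<rho> x. cl_sub (cl_partial \<mu> (h' \<rho>) x) (cl_comm p (C' \<mu> x) (h' \<rho> x)) = cl_zero)"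
proof (intro conjI allI)
  let ?T = "\<lambda>y. cl_inv p (S y)"
  note inverse = cl_inv_inverse[OF S_inv]
  fix \<mu> \<rho> x
  show "h' \<rho> x \<in> cl_circS"
    unfolding h'_def lower_def by (intro cl_circS_conjugate cl_circS_scale inverse h_circ)
  show "C' \<mu> x \<in> cl_circS"
    unfolding C'_def by (intro cl_circS_sub cl_circS_conjugate inverse C_circ S_circ)
  have "has_cl_partial \<mu> (lower p h \<rho>) (cl_scale (eta p \<rho>) (cl_partial \<mu> (h \<rho>) x)) x"
    unfolding lower_def by (intro has_cl_partial_scale cl_smooth_has_cl_partial h_smooth)
  then have "has_cl_partial \<mu> (lower p h \<rho>) (cl_comm p (C \<mu> x) (lower p h \<rho> x)) x"
    using eq[of \<mu> \<rho> x] by (simp add: cl_sub_eq_cl_zero_iff cl_partial_eqI)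
  from has_cl_partial_conjugate[OF cl_smooth_has_cl_partial[OF S_smooth] this inverse]
  have "cl_partial \<mu> (h' \<rho>) x = cl_sub (cl_comm p (cl_mul p (cl_mul p (?T x) (C \<mu> x)) (S x)) (h' \<rho> x))
      (cl_comm p (cl_mul p (?T x) (cl_partial \<mu> S x)) (h' \<rho> x))"
    unfolding h'_def cl_conjugate_comm[OF inverse(1)] by (rule cl_partial_eqI)
  then show "cl_sub (cl_partial \<mu> (h' \<rho>) x) (cl_comm p (C' \<mu> x) (h' \<rho> x)) = cl_zero"
    by (simp add: C'_def cl_comm_sub_left cl_sub_eq_cl_zero_iff)
qed

end
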